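(* Let $\mathbf{S}$ be any one of the four systems $\mathbf{G3N}$, $\mathbf{G3NeF}$, $\mathbf{G3CoPC}$, $\mathbf{G3MPC}$. The contraction rule "from $\Gamma,\alpha,\alpha\Rightarrow\varphi$ infer $\Gamma,\alpha\Rightarrow\varphi$" is height-preserving admissible in $\mathbf{S}$: for all finite multisets $\Gamma$ and formulas $\alpha,\varphi$, if $\Gamma,\alpha,\alpha\Rightarrow\varphi$ has a derivation in $\mathbf{S}$ of height at most $n$, then $\Gamma,\alpha\Rightarrow\varphi$ has a derivation in $\mathbf{S}$ of height at most $n$.
   Context: Formulas are generated from a countable set of propositional variables $p,q,\dots$ and the constant $\top$ by the grammar $\varphi::= p\mid\top\mid\varphi\wedge\varphi\mid\varphi\vee\varphi\mid\varphi\to\varphi\mid\neg\varphi$ (there is no constant $\bot$). $\varphi\leftrightarrow\psi$ abbreviates $(\varphi\to\psi)\wedge(\psi\to\varphi)$. A sequent is an expression $\Gamma\Rightarrow\varphi$ where $\Gamma$ is a finite multiset of formulas and $\varphi$ is a formula (the goal); $\Gamma,\Delta$ denotes multiset union and $\Gamma,\alpha$ denotes $\Gamma$ with one more occurrence of $\alpha$. Rules ($p$ a propositional variable): (ax) $\Gamma,p\Rightarrow p$ (no premises); ($\top$) $\Gamma\Rightarrow\top$ (no premises); ($\to$r) from $\Gamma,\alpha\Rightarrow\beta$ infer $\Gamma\Rightarrow\alpha\to\beta$; ($\to$l) from $\Gamma,\alpha\to\beta\Rightarrow\alpha$ and $\Gamma,\beta\Rightarrow\varphi$ infer $\Gamma,\alpha\to\beta\Rightarrow\varphi$;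 ($\wedge$r) from $\Gamma\Rightarrow\alpha$ and $\Gamma\Rightarrow\beta$ infer $\Gamma\Rightarrow\alpha\wedge\beta$; ($\wedge$l) from $\Gamma,\alpha,\beta\Rightarrow\varphi$ infer $\Gamma,\alpha\wedge\beta\Rightarrow\varphi$; ($\vee$r$_1$), ($\vee$r$_2$) from $\Gamma\Rightarrow\alpha$ (resp. $\Gamma\Rightarrow\beta$) infer $\Gamma\Rightarrow\alpha\vee\beta$; ($\vee$l) from $\Gamma,\alpha\Rightarrow\varphi$ and $\Gamma,\beta\Rightarrow\varphi$ infer $\Gamma,\alpha\vee\beta\Rightarrow\varphi$; (n) from $\Gamma,\neg\alpha,\beta\Rightarrow\alpha$ and $\Gamma,\neg\alpha,\alpha\Rightarrow\beta$ infer $\Gamma,\neg\alpha\Rightarrow\neg\beta$; (nef) from $\Gamma,\neg\alpha\Rightarrow\alpha$ infer $\Gamma,\neg\alpha\Rightarrow\neg\beta$; (copc) from $\Gamma,\neg\alpha,\beta\Rightarrow\alpha$ infer $\Gamma,\neg\alpha\Rightarrow\neg\beta$; (an) from $\Gamma,\alpha\Rightarrow\neg\alpha$ infer $\Gamma\Rightarrow\neg\alpha$. The rules (ax) through ($\vee$l) are the positive rules. The four systems are: $\mathbf{G3N}$ = positive rules + (n); $\mathbf{G3NeF}$ = positive rules + (n) + (nef); $\mathbf{G3CoPC}$ = positive rules + (copc); $\mathbf{G3MPC}$ = positive rules + (copc) + (an). None of them contains weakening, contraction or cut as a rule. A derivation is a finite tree of rule instances with leaves instances of (ax) or ($\top$);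 its height is the number of inference steps on a longest branch. A sequent is derivable if it has a derivation; a formula $\varphi$ is a theorem if $\Rightarrow\varphi$ (empty antecedent) is derivable. *)

theory Defs
  imports Main "HOL-Library.Multiset"
begin

datatype fm = Var nat | Top | Conj fm fm | Disj fm fm | Imp fm fm | Neg fm

datatype sys = G3N | G3NeF | G3CoPC | G3MPC

definition has_n :: "sys \<Rightarrow> bool" where
  "has_n S \<longleftrightarrow> S = G3N \<or> S = G3NeF"
definition has_nef :: "sys \<Rightarrow> bool" where
  "has_nef S \<longleftrightarrow> S = G3NeF"
definition has_copc :: "sys \<Rightarrow> bool" where
  "has_copc S \<longleftrightarrow> S = G3CoPC \<or> S = G3MPC"
definition has_an :: "sys \<Rightarrow> bool" where
  "has_an S \<longleftrightarrow> S = G3MPC"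

inductive deriv :: "sys \<Rightarrow> fm multiset \<Rightarrow> fm \<Rightarrow> nat \<Rightarrow> bool" where
  ax: "deriv S (add_mset (Var p) G) (Var p) 0"
| top: "deriv S G Top 0"
| impR: "deriv S (add_mset a G) b h \<Longrightarrow> deriv S G (Imp a b) (Suc h)"
| impL: "deriv S (add_mset (Imp a b) G) a h1 \<Longrightarrow> deriv S (add_mset b G) c h2 \<Longrightarrow>
          deriv S (add_mset (Imp a b) G) c (Suc (max h1 h2))"
| conjR: "deriv S G a h1 \<Longrightarrow> deriv S G b h2 \<Longrightarrow> deriv S G (Conj a b) (Suc (max h1 h2))"
| conjL: "deriv S (add_mset a (add_mset b G)) c h \<Longrightarrow> deriv S (add_mset (Conj a b) G) c (Suc h)"
| disjR1: "deriv S G a h \<Longrightarrow> deriv S G (Disj a b) (Suc h)"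
| disjR2: "deriv S G b h \<Longrightarrow> deriv S G (Disj a b) (Suc h)"
| disjL: "deriv S (add_mset a G) c h1 \<Longrightarrow> deriv S (add_mset b G) c h2 \<Longrightarrow>
          deriv S (add_mset (Disj a b) G) c (Suc (max h1 h2))"
| n: "has_n S \<Longrightarrow> deriv S (add_mset b (add_mset (Neg a) G)) a h1 \<Longrightarrow>
        deriv S (add_mset a (add_mset (Neg a) G)) b h2 \<Longrightarrow>
        deriv S (add_mset (Neg a) G) (Neg b) (Suc (max h1 h2))"
| nef: "has_nef S \<Longrightarrow> deriv S (add_mset (Neg a) G) a h \<Longrightarrow>
        deriv S (add_mset (Neg a) G) (Neg b) (Suc h)"
| copc: "has_copc S \<Longrightarrow> deriv S (add_mset b (add_mset (Neg a) G)) a h \<Longrightarrow>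
        deriv S (add_mset (Neg a) G) (Neg b) (Suc h)"
| an: "has_an S \<Longrightarrow> deriv S (add_mset a G) (Neg a) h \<Longrightarrow> deriv S G (Neg a) (Suc h)"

definition deriv_le :: "sys \<Rightarrow> fm multiset \<Rightarrow> fm \<Rightarrow> nat \<Rightarrow> bool" where
  "deriv_le S G phi n \<longleftrightarrow> (\<exists>h\<le>n. deriv S G phi h)"

end

theory Submission
  imports Defs
begin

text \<open>
  Contraction is proved for the more general relation \<open>contracts_to G G'\<close>: every sub-multiset
  G' of G with the same underlying set derives what G derives, at no greater height. The only interesting case is a left rule for \<open>\<and>\<close>, \<open>\<or>\<close> or \<open>\<rightarrow>\<close>
  whose principal formula still has further copies in the context of G but none in that of G'. Then
  the premise is first contracted to a context that retains one copy of the principal formula,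
  height-preserving inversion replaces this copy by its components, and a second use of the
  induction hypothesis removes the duplicated components. The negation rules keep their principal
  formula in the premises, so they need no inversion.
\<close>

lemma deriv_le_mono: "deriv_le S G c h \<Longrightarrow> h \<le> h' \<Longrightarrow> deriv_le S G c h'"
  unfolding deriv_le_def by (meson order_trans)

lemma deriv_le_of_deriv: "deriv S G c h \<Longrightarrow> h \<le> h' \<Longrightarrow> deriv_le S G c h'"
  unfolding deriv_le_def by blast

lemma deriv_le_transfer:
  "deriv_le S G c h \<Longrightarrow> (\<And>h'. h' \<le> h \<Longrightarrow> deriv S G c h' \<Longrightarrow> deriv_le S G' c' h') \<Longrightarrow>
   deriv_le S G' c' h"
  unfolding deriv_le_def by (meson order_trans)

lemma deriv_le_ax: "Var p \<in># G \<Longrightarrow> deriv_le S G (Var p) h"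
  unfolding deriv_le_def by (metis deriv.ax insert_DiffM zero_le)

lemma deriv_le_top: "deriv_le S G Top h"
  unfolding deriv_le_def using deriv.top by blast

lemma deriv_le_impR: "deriv_le S (add_mset a G) b h \<Longrightarrow> deriv_le S G (Imp a b) (Suc h)"
  unfolding deriv_le_def by (meson Suc_le_mono deriv.impR)

lemma deriv_le_impL:
  "deriv_le S (add_mset (Imp a b) G) a h \<Longrightarrow> deriv_le S (add_mset b G) c h \<Longrightarrow>
   deriv_le S (add_mset (Imp a b) G) c (Suc h)"
  unfolding deriv_le_def by (metis Suc_le_mono deriv.impL max.bounded_iff)

lemma deriv_le_conjR: "deriv_le S G a h \<Longrightarrow> deriv_le S G b h \<Longrightarrow> deriv_le S G (Conj a b) (Suc h)"
  unfolding deriv_le_def by (metis Suc_le_mono deriv.conjR max.bounded_iff)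

lemma deriv_le_conjL:
  "deriv_le S (add_mset a (add_mset b G)) c h \<Longrightarrow> deriv_le S (add_mset (Conj a b) G) c (Suc h)"
  unfolding deriv_le_def by (meson Suc_le_mono deriv.conjL)

lemma deriv_le_disjR1: "deriv_le S G a h \<Longrightarrow> deriv_le S G (Disj a b) (Suc h)"
  unfolding deriv_le_def by (meson Suc_le_mono deriv.disjR1)

lemma deriv_le_disjR2: "deriv_le S G b h \<Longrightarrow> deriv_le S G (Disj a b) (Suc h)"
  unfolding deriv_le_def by (meson Suc_le_mono deriv.disjR2)

lemma deriv_le_disjL:
  "deriv_le S (add_mset a G) c h \<Longrightarrow> deriv_le S (add_mset b G) c h \<Longrightarrow>
   deriv_le S (add_mset (Disj a b) G) c (Suc h)"
  unfolding deriv_le_def by (metis Suc_le_mono deriv.disjL max.bounded_iff)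

lemma deriv_le_n:
  "has_n S \<Longrightarrow> deriv_le S (add_mset b (add_mset (Neg a) G)) a h \<Longrightarrow>
   deriv_le S (add_mset a (add_mset (Neg a) G)) b h \<Longrightarrow> deriv_le S (add_mset (Neg a) G) (Neg b) (Suc h)"
  unfolding deriv_le_def by (metis Suc_le_mono deriv.n max.bounded_iff)

lemma deriv_le_nef:
  "has_nef S \<Longrightarrow> deriv_le S (add_mset (Neg a) G) a h \<Longrightarrow> deriv_le S (add_mset (Neg a) G) (Neg b) (Suc h)"
  unfolding deriv_le_def by (meson Suc_le_mono deriv.nef)

lemma deriv_le_copc:
  "has_copc S \<Longrightarrow> deriv_le S (add_mset b (add_mset (Neg a) G)) a h \<Longrightarrow>
   deriv_le S (add_mset (Neg a) G) (Neg b) (Suc h)"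
  unfolding deriv_le_def by (meson Suc_le_mono deriv.copc)

lemma deriv_le_an: "has_an S \<Longrightarrow> deriv_le S (add_mset a G) (Neg a) h \<Longrightarrow> deriv_le S G (Neg a) (Suc h)"
  unfolding deriv_le_def by (meson Suc_le_mono deriv.an)

text \<open>The hypotheses \<open>conj\<close>, \<open>disj\<close>, \<open>imp\<close> cover a last rule with principal formula P; in
  every other rule P lies in the context and is replaced by D in the premises.\<close>

lemma deriv_left_inversion:
  assumes "deriv S G c h" "P \<in># G" "P \<notin> range Var" "P \<notin> range Neg"
    and conj: "\<And>S x y C c h. P = Conj x y \<Longrightarrow> deriv S (add_mset x (add_mset y C)) c h \<Longrightarrow>
      deriv_le S (D + C) c h"
    and disj: "\<And>S x y C c h1 h2. P = Disj x y \<Longrightarrow> deriv S (add_mset x C) c h1 \<Longrightarrow>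
      deriv S (add_mset y C) c h2 \<Longrightarrow> deriv_le S (D + C) c (max h1 h2)"
    and imp: "\<And>S x y C c h. P = Imp x y \<Longrightarrow> deriv S (add_mset y C) c h \<Longrightarrow> deriv_le S (D + C) c h"
  shows "deriv_le S (D + (G - {#P#})) c h"
  using assms(1,2)
proof (induction rule: deriv.induct)
  case (ax S p G)
  then show ?case using assms(3) by (auto intro: deriv_le_ax)
next
  case (top S G)
  show ?case by (rule deriv_le_top)
next
  case (impR S a G b h)
  then show ?case by (auto intro: deriv_le_impR)
next
  case (impL S a b G h1 c h2)
  show ?case
  proof (cases "Imp a b = P")
    case True
    with imp[OF True[symmetric] impL.hyps(2)] show ?thesis by (auto intro: deriv_le_mono)
  next
    case False
    with impL have "P \<in># G" by auto
    with impL.IH have "deriv_le S (add_mset (Imp a b) (D + (G - {#P#}))) a (max h1 h2)"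
      "deriv_le S (add_mset b (D + (G - {#P#}))) c (max h1 h2)"
      by (auto intro: deriv_le_mono)
    with \<open>P \<in># G\<close> show ?thesis by (auto intro: deriv_le_impL)
  qed
next
  case (conjR S G a h1 b h2)
  then have "deriv_le S (D + (G - {#P#})) a (max h1 h2)" "deriv_le S (D + (G - {#P#})) b (max h1 h2)"
    by (auto intro: deriv_le_mono)
  then show ?case by (rule deriv_le_conjR)
next
  case (conjL S a b G c h)
  show ?case
  proof (cases "Conj a b = P")
    case True
    with conj[OF True[symmetric] conjL.hyps] show ?thesis by (auto intro: deriv_le_mono)
  next
    case False
    with conjL have "P \<in># G" by auto
    with conjL.IH show ?thesis by (auto intro: deriv_le_conjL)
  qed
next
  case (disjR1 S G a h b)
  then show ?case by (auto intro: deriv_le_disjR1)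
next
  case (disjR2 S G b h a)
  then show ?case by (auto intro: deriv_le_disjR2)
next
  case (disjL S a G c h1 b h2)
  show ?case
  proof (cases "Disj a b = P")
    case True
    with disj[OF True[symmetric] disjL.hyps] show ?thesis by (auto intro: deriv_le_mono le_SucI)
  next
    case False
    with disjL have "P \<in># G" by auto
    with disjL.IH have "deriv_le S (add_mset a (D + (G - {#P#}))) c (max h1 h2)"
      "deriv_le S (add_mset b (D + (G - {#P#}))) c (max h1 h2)"
      by (auto intro: deriv_le_mono)
    with \<open>P \<in># G\<close> show ?thesis by (auto intro: deriv_le_disjL)
  qed
next
  case (n S b a G h1 h2)
  with assms(4) have "P \<in># G" by auto
  with n.IH have "deriv_le S (add_mset b (add_mset (Neg a) (D + (G - {#P#})))) a (max h1 h2)"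
    "deriv_le S (add_mset a (add_mset (Neg a) (D + (G - {#P#})))) b (max h1 h2)"
    by (auto intro: deriv_le_mono)
  with \<open>P \<in># G\<close> n.hyps(1) show ?case by (auto intro: deriv_le_n)
next
  case (nef S a G h b)
  with assms(4) have "P \<in># G" by auto
  with nef show ?case by (auto intro: deriv_le_nef)
next
  case (copc S b a G h)
  with assms(4) have "P \<in># G" by auto
  with copc show ?case by (auto intro: deriv_le_copc)
next
  case (an S a G h)
  then show ?case by (auto intro: deriv_le_an)
qed

lemma deriv_le_left_inversion:
  assumes "deriv_le S (add_mset P G) c h" "P \<notin> range Var" "P \<notin> range Neg"
    and "\<And>S x y C c h. P = Conj x y \<Longrightarrow> deriv S (add_mset x (add_mset y C)) c h \<Longrightarrow>
      deriv_le S (D + C) c h"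
    and "\<And>S x y C c h1 h2. P = Disj x y \<Longrightarrow> deriv S (add_mset x C) c h1 \<Longrightarrow>
      deriv S (add_mset y C) c h2 \<Longrightarrow> deriv_le S (D + C) c (max h1 h2)"
    and "\<And>S x y C c h. P = Imp x y \<Longrightarrow> deriv S (add_mset y C) c h \<Longrightarrow> deriv_le S (D + C) c h"
  shows "deriv_le S (D + G) c h"
  using assms(1)
proof (rule deriv_le_transfer)
  fix h' assume "deriv S (add_mset P G) c h'"
  then have "deriv_le S (D + (add_mset P G - {#P#})) c h'"
    by (rule deriv_left_inversion) (use assms in auto)
  then show "deriv_le S (D + G) c h'" by simp
qed

lemma deriv_le_conjL_inversion:
  assumes "deriv_le S (add_mset (Conj a b) G) c h"
  shows "deriv_le S (add_mset a (add_mset b G)) c h"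
  by (rule deriv_le_left_inversion[OF assms, where D = "{#a, b#}", simplified])
    (auto simp: deriv_le_of_deriv)

lemma deriv_le_disjL_inversion1:
  assumes "deriv_le S (add_mset (Disj a b) G) c h"
  shows "deriv_le S (add_mset a G) c h"
  by (rule deriv_le_left_inversion[OF assms, where D = "{#a#}", simplified])
    (auto simp: deriv_le_of_deriv)

lemma deriv_le_disjL_inversion2:
  assumes "deriv_le S (add_mset (Disj a b) G) c h"
  shows "deriv_le S (add_mset b G) c h"
  by (rule deriv_le_left_inversion[OF assms, where D = "{#b#}", simplified])
    (auto simp: deriv_le_of_deriv)

lemma deriv_le_impL_inversion:
  assumes "deriv_le S (add_mset (Imp a b) G) c h"
  shows "deriv_le S (add_mset b G) c h"
  by (rule deriv_le_left_inversion[OF assms, where D = "{#b#}", simplified])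
    (auto simp: deriv_le_of_deriv)

definition contracts_to :: "'a multiset \<Rightarrow> 'a multiset \<Rightarrow> bool" where
  "contracts_to G G' \<longleftrightarrow> G' \<subseteq># G \<and> set_mset G \<subseteq> set_mset G'"

lemma contracts_to_add_mset: "contracts_to G G' \<Longrightarrow> contracts_to (add_mset x G) (add_mset x G')"
  by (auto simp: contracts_to_def)

lemma contracts_to_union_redundant: "set_mset A \<subseteq> set_mset G \<Longrightarrow> contracts_to (A + G) G"
  by (auto simp: contracts_to_def)

lemma contracts_to_member: "contracts_to G G' \<Longrightarrow> x \<in># G \<Longrightarrow> x \<in># G'"
  by (auto simp: contracts_to_def)

lemma contracts_to_add_mset_cases:
  assumes "contracts_to (add_mset x C) G'"
  obtains (separate) C' where "G' = add_mset x C'" "contracts_to C C'"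
    | (absorbed) C' where "G' = add_mset x C'" "contracts_to C (add_mset x C')"
proof -
  define C' where "C' = G' - {#x#}"
  have G': "G' = add_mset x C'"
    using assms by (simp add: C'_def contracts_to_def)
  have sub: "C' \<subseteq># C" and set: "set_mset C \<subseteq> insert x (set_mset C')"
    using assms by (auto simp: G' contracts_to_def)
  show thesis
  proof (cases "x \<in># C \<and> x \<notin># C'")
    case True
    with sub have "add_mset x C' \<subseteq># C"
      by (metis diff_single_trivial insert_DiffM2 insert_subset_eq_iff subset_eq_diff_conv)
    with G' set show thesis by (intro absorbed) (auto simp: contracts_to_def)
  next
    case False
    with G' sub set show thesis by (intro separate) (auto simp: contracts_to_def)
  qed
qed

lemma conjL_contraction:
  assumes IH: "\<And>G G' c. deriv_le S G c m \<Longrightarrow> contracts_to G G' \<Longrightarrow> deriv_le S G' c m"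
    and d: "deriv_le S (add_mset a (add_mset b C)) c m"
    and "contracts_to (add_mset (Conj a b) C) G'"
  shows "deriv_le S G' c (Suc m)"
  using assms(3)
proof (cases rule: contracts_to_add_mset_cases)
  case (separate C')
  with IH[OF d] have "deriv_le S (add_mset a (add_mset b C')) c m"
    by (simp add: contracts_to_add_mset)
  with separate show ?thesis by (simp add: deriv_le_conjL)
next
  case (absorbed C')
  with IH[OF d] have "deriv_le S (add_mset (Conj a b) (add_mset a (add_mset b C'))) c m"
    by (simp add: contracts_to_add_mset add_mset_commute)
  then have "deriv_le S (add_mset a (add_mset b (add_mset a (add_mset b C')))) c m"
    by (rule deriv_le_conjL_inversion)
  then have "deriv_le S (add_mset a (add_mset b C')) c m"
    by (rule IH) (use contracts_to_union_redundant[of "{#a, b#}"] in simp)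
  with absorbed show ?thesis by (simp add: deriv_le_conjL)
qed

lemma disjL_contraction:
  assumes IH: "\<And>G G' c. deriv_le S G c m \<Longrightarrow> contracts_to G G' \<Longrightarrow> deriv_le S G' c m"
    and da: "deriv_le S (add_mset a C) c m" and db: "deriv_le S (add_mset b C) c m"
    and "contracts_to (add_mset (Disj a b) C) G'"
  shows "deriv_le S G' c (Suc m)"
  using assms(4)
proof (cases rule: contracts_to_add_mset_cases)
  case (separate C')
  with IH[OF da] IH[OF db] show ?thesis by (simp add: contracts_to_add_mset deriv_le_disjL)
next
  case (absorbed C')
  with IH[OF da] IH[OF db]
  have "deriv_le S (add_mset (Disj a b) (add_mset a C')) c m"
    "deriv_le S (add_mset (Disj a b) (add_mset b C')) c m"
    by (simp_all add: contracts_to_add_mset add_mset_commute)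
  then have "deriv_le S (add_mset a (add_mset a C')) c m" "deriv_le S (add_mset b (add_mset b C')) c m"
    by (auto intro: deriv_le_disjL_inversion1 deriv_le_disjL_inversion2)
  then have "deriv_le S (add_mset a C') c m" "deriv_le S (add_mset b C') c m"
    using IH contracts_to_union_redundant[of "{#a#}"] contracts_to_union_redundant[of "{#b#}"]
    by auto
  with absorbed show ?thesis by (simp add: deriv_le_disjL)
qed

lemma impL_contraction:
  assumes IH: "\<And>G G' c. deriv_le S G c m \<Longrightarrow> contracts_to G G' \<Longrightarrow> deriv_le S G' c m"
    and da: "deriv_le S (add_mset (Imp a b) C) a m" and db: "deriv_le S (add_mset b C) c m"
    and G': "contracts_to (add_mset (Imp a b) C) G'"
  shows "deriv_le S G' c (Suc m)"
  using G'
proof (cases rule: contracts_to_add_mset_cases)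
  case (separate C')
  with IH[OF da G'] IH[OF db] show ?thesis by (simp add: contracts_to_add_mset deriv_le_impL)
next
  case (absorbed C')
  with IH[OF db] have "deriv_le S (add_mset (Imp a b) (add_mset b C')) c m"
    by (simp add: contracts_to_add_mset add_mset_commute)
  then have "deriv_le S (add_mset b (add_mset b C')) c m"
    by (rule deriv_le_impL_inversion)
  then have "deriv_le S (add_mset b C') c m"
    by (rule IH) (use contracts_to_union_redundant[of "{#b#}"] in simp)
  with absorbed IH[OF da G'] show ?thesis by (simp add: deriv_le_impL)
qed

lemma deriv_contraction:
  assumes "deriv S G c h" "contracts_to G G'"
  shows "deriv_le S G' c h"
  using assms
proof (induction h arbitrary: G G' c rule: less_induct)
  case (less h)
  have IH: "deriv_le S G' c m" if "deriv S G c h'" "h' \<le> m" "m < h" "contracts_to G G'"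
    for G G' c h' m
    using that less.IH by (meson deriv_le_mono le_less_trans)
  have IH_le: "\<And>G G' c. deriv_le S G c m \<Longrightarrow> contracts_to G G' \<Longrightarrow> deriv_le S G' c m"
    if "m < h" for m
    using that IH by (elim deriv_le_transfer) auto
  from less.prems(1) show ?case
  proof cases
    case (ax p C)
    with less.prems(2) show ?thesis by (simp add: contracts_to_member deriv_le_ax)
  next
    case top
    then show ?thesis by (simp add: deriv_le_top)
  next
    case (impR a b m)
    with less.prems(2) show ?thesis by (auto intro!: deriv_le_impR intro: IH contracts_to_add_mset)
  next
    case (impL a b C h1 h2)
    with less.prems(2) show ?thesis
      by (auto intro!: impL_contraction[OF IH_le] intro: deriv_le_of_deriv)
  next
    case (conjR a h1 b h2)
    with less.prems(2) show ?thesis by (auto intro!: deriv_le_conjR intro: IH)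
  next
    case (conjL a b C m)
    with less.prems(2) show ?thesis
      by (auto intro!: conjL_contraction[OF IH_le] intro: deriv_le_of_deriv)
  next
    case (disjR1 a m b)
    with less.prems(2) show ?thesis by (auto intro!: deriv_le_disjR1 intro: IH)
  next
    case (disjR2 b m a)
    with less.prems(2) show ?thesis by (auto intro!: deriv_le_disjR2 intro: IH)
  next
    case (disjL a C h1 b h2)
    with less.prems(2) show ?thesis
      by (auto intro!: disjL_contraction[OF IH_le, where a = a and b = b] intro: deriv_le_of_deriv)
  next
    case (n b a C h1 h2)
    with less.prems(2) obtain C' where G': "G' = add_mset (Neg a) C'"
      by (metis contracts_to_member multi_member_split union_single_eq_member)
    with n less.prems(2) show ?thesis by (auto intro!: deriv_le_n intro: IH contracts_to_add_mset)
  next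
    case (nef a C m b)
    with less.prems(2) obtain C' where G': "G' = add_mset (Neg a) C'"
      by (metis contracts_to_member multi_member_split union_single_eq_member)
    with nef less.prems(2) show ?thesis by (auto intro!: deriv_le_nef intro: IH contracts_to_add_mset)
  next
    case (copc b a C m)
    with less.prems(2) obtain C' where G': "G' = add_mset (Neg a) C'"
      by (metis contracts_to_member multi_member_split union_single_eq_member)
    with copc less.prems(2) show ?thesis by (auto intro!: deriv_le_copc intro: IH contracts_to_add_mset)
  next
    case (an a m)
    with less.prems(2) show ?thesis by (auto intro!: deriv_le_an intro: IH contracts_to_add_mset)
  qed
qed

lemma deriv_le_contraction: "deriv_le S G c h \<Longrightarrow> contracts_to G G' \<Longrightarrow> deriv_le S G' c h"
  by (erule deriv_le_transfer) (rule deriv_contraction)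

theorem proposition3p2:
  fixes S :: sys and G :: "fm multiset" and a phi :: fm and n :: nat
  assumes "deriv_le S (add_mset a (add_mset a G)) phi n"
  shows "deriv_le S (add_mset a G) phi n"
  using assms by (rule deriv_le_contraction) (use contracts_to_union_redundant[of "{#a#}"] in simp)

end
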